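(* Let $\alpha>0$, $A\ge0$, $B>0$, $t>0$, and let $P_n(x,t)=x^n+\mathsf{p}_1(n,t)x^{n-1}+\cdots$ be the monic polynomials orthogonal on $[0,\infty)$ w.r.t. $w(x,t)=x^\alpha e^{-x}(A+B\theta(x-t))$, with norms $h_n(t)$. Let $r_n(t)=Bt^\alpha e^{-t}P_n(t,t)P_{n-1}(t,t)/h_{n-1}(t)$. Then for $n\ge1$ $$\frac{d}{dt}\mathsf{p}_1(n,t)=r_n(t).$$
   Context: $\theta$ is the Heaviside function ($1$ for $x>0$, $0$ otherwise); $P_n(t,t)$ is $P_n(x,t)$ at $x=t$. *)

theory Defs
  imports "HOL-Analysis.Analysis" "HOL-Computational_Algebra.Polynomial"
begin

definition heaviside :: "real \<Rightarrow> real" where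
  "heaviside x = (if x > 0 then 1 else 0)"

definition wgt :: "real \<Rightarrow> real \<Rightarrow> real \<Rightarrow> real \<Rightarrow> real \<Rightarrow> real" where
  "wgt \<alpha> A B t x = x powr \<alpha> * exp (- x) * (A + B * heaviside (x - t))"

definition monic_OPS :: "real \<Rightarrow> real \<Rightarrow> real \<Rightarrow> real \<Rightarrow> (nat \<Rightarrow> real poly) \<Rightarrow> bool" where
  "monic_OPS \<alpha> A B t Q \<longleftrightarrow>
     (\<forall>n. degree (Q n) = n \<and> lead_coeff (Q n) = 1) \<and>
     (\<forall>n m. m \<noteq> n \<longrightarrow>
        integral {0..} (\<lambda>x. poly (Q n) x * poly (Q m) x * wgt \<alpha> A B t x) = 0)"

definition hnorm :: "real \<Rightarrow> real \<Rightarrow> real \<Rightarrow> real \<Rightarrow> real poly \<Rightarrow> real" where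
  "hnorm \<alpha> A B t q = integral {0..} (\<lambda>x. (poly q x)\<^sup>2 * wgt \<alpha> A B t x)"

end

theory Submission
  imports Defs
begin

text \<open>
  Let M(s,p) = \<integral> p w(x,s) dx over [0,\<infinity>) and R(p,s) = \<integral> p x^\<alpha> e^-x dx over
  [0,s]; moving the jump of the weight from t to s changes M by B (R(p,t) - R(p,s)).
  Since u = P_n(s) - P_n(t) has degree < n, comparing the orthogonality of P_n(s) and of
  P_n(t) to P_{n-1}(t) gives
    (p_1(n,s) - p_1(n,t)) h_{n-1}(t)
      = B [R(P_n(t) P_{n-1}(t), \<cdot>)]_t^s + B [R(u P_{n-1}(t), \<cdot>)]_t^s.
  The first term has derivative B t^\<alpha> e^-t P_n(t,t) P_{n-1}(t,t) at s = t. The second is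
  O((s - t)^2), because u = O(|s - t|) uniformly near t: on polynomials of degree < n the
  sup norm on a compact interval is dominated by the norm of M(2t,\<cdot>), and the same
  orthogonality turns M(s, u^2) into B [R(P_n(t) u, \<cdot>)]_t^s = O(|s - t| \<parallel>u\<parallel>).
\<close>

lemma monic_basis_expansion:
  fixes Q :: "nat \<Rightarrow> 'a::comm_ring_1 poly"
  assumes deg: "\<And>k. degree (Q k) = k" and monic: "\<And>k. lead_coeff (Q k) = 1"
    and q: "\<And>i. i \<ge> m \<Longrightarrow> coeff q i = 0"
  shows "\<exists>c. q = (\<Sum>k<m. smult (c k) (Q k))"
  using q
proof (induction m arbitrary: q)
  case 0
  then have "q = 0" by (simp add: poly_eq_iff)
  then show ?case by simp
next
  case (Suc m)
  define r where "r = q - smult (coeff q m) (Q m)"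
  have "coeff r i = 0" if "i \<ge> m" for i
  proof (cases "i = m")
    case True
    then show ?thesis using deg[of m] monic[of m] by (simp add: r_def)
  next
    case False
    then have "coeff (Q m) i = 0" using that by (intro coeff_eq_0) (simp add: deg)
    then show ?thesis using Suc.prems False that by (simp add: r_def)
  qed
  then obtain c where "r = (\<Sum>k<m. smult (c k) (Q k))" using Suc.IH by blast
  moreover have "q = r + smult (coeff q m) (Q m)" by (simp add: r_def)
  ultimately have "q = (\<Sum>k<Suc m. smult ((c(m := coeff q m)) k) (Q k))"
    by simp
  then show ?case by blast
qed

lemma coeff_diff_monic_same_degree:
  fixes p q :: "'a::comm_ring_1 poly"
  assumes "degree p = n" "degree q = n" "lead_coeff p = 1" "lead_coeff q = 1" "i \<ge> n"
  shows "coeff (p - q) i = 0"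
  using assms by (cases "i = n") (simp_all add: coeff_eq_0)

lemma sqrt_le_of_le_mult_sqrt:
  fixes N c :: real
  assumes "0 \<le> N" "0 \<le> c" "N \<le> c * sqrt N"
  shows "sqrt N \<le> c"
proof (cases "N = 0")
  case False
  then have "sqrt N > 0" using assms(1) by simp
  moreover have "sqrt N * sqrt N \<le> c * sqrt N" using assms by simp
  ultimately show ?thesis by (metis mult_right_le_imp_le)
qed (use assms in simp)

lemma has_real_derivative_zero_if_quadratic_bound:
  fixes E :: "real \<Rightarrow> real"
  assumes "E t = 0" and "\<forall>\<^sub>F s in nhds t. \<bar>E s\<bar> \<le> C * (s - t)\<^sup>2"
  shows "(E has_real_derivative 0) (at t)"
proof -
  have "((\<lambda>s. (E s - E t) / (s - t)) \<longlongrightarrow> 0) (at t)"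
  proof (rule Lim_null_comparison)
    show "\<forall>\<^sub>F s in at t. norm ((E s - E t) / (s - t)) \<le> C * \<bar>s - t\<bar>"
      using assms(2) unfolding eventually_at_filter
      by eventually_elim (simp add: assms(1) abs_divide divide_le_eq power2_eq_square abs_mult_self_eq mult.assoc)
    show "((\<lambda>s. C * \<bar>s - t\<bar>) \<longlongrightarrow> 0) (at t)"
      by (auto intro!: tendsto_eq_intros)
  qed
  then show ?thesis by (simp add: has_field_derivative_iff)
qed

locale step_laguerre_weight =
  fixes \<alpha> A B :: real
  assumes alpha_gt: "\<alpha> > -1" and A_nonneg: "A \<ge> 0" and B_pos: "B > 0"
begin

definition base_weight :: "real \<Rightarrow> real" where
  "base_weight x = x powr \<alpha> * exp (- x)"

definition wpoly :: "real poly \<Rightarrow> real \<Rightarrow> real" where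
  "wpoly p x = poly p x * base_weight x"

definition partial_moment :: "real poly \<Rightarrow> real \<Rightarrow> real" where
  "partial_moment p s = integral {0..s} (wpoly p)"

definition moment :: "real \<Rightarrow> real poly \<Rightarrow> real" where
  "moment s p = integral {0..} (\<lambda>x. poly p x * wgt \<alpha> A B s x)"

lemma base_weight_pos: "x > 0 \<Longrightarrow> base_weight x > 0"
  by (simp add: base_weight_def)

lemma base_weight_nonneg: "base_weight x \<ge> 0"
  by (simp add: base_weight_def)

lemma integrable_monomial_base_weight: "(\<lambda>x. x ^ i * base_weight x) integrable_on {0..}"
proof -
  have "((\<lambda>x. x powr ((\<alpha> + real i + 1) - 1) / exp x) has_integral Gamma (\<alpha> + real i + 1)) {0..}"
    by (rule Gamma_integral_real) (use alpha_gt in simp)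
  then show ?thesis
  proof (rule has_integral_integrable[OF has_integral_eq[rotated]])
    fix x :: real assume "x \<in> {0..}"
    then show "x powr (\<alpha> + real i + 1 - 1) / exp x = x ^ i * base_weight x"
      by (cases "x = 0") (simp_all add: base_weight_def powr_add powr_realpow exp_minus field_simps)
  qed
qed

lemma integrable_wpoly: "wpoly p integrable_on {0..}"
proof -
  have "wpoly p = (\<lambda>x. \<Sum>i\<le>degree p. coeff p i * (x ^ i * base_weight x))"
    by (simp add: fun_eq_iff wpoly_def poly_altdef sum_distrib_right mult.assoc)
  moreover have "(\<lambda>x. coeff p i * (x ^ i * base_weight x)) integrable_on {0..}" for i
    using integrable_on_cmult_left[OF integrable_monomial_base_weight[of i], of "coeff p i"] by simp
  ultimately show ?thesis by (simp add: integrable_sum)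
qed

lemma wpoly_add: "wpoly (p + q) = (\<lambda>x. wpoly p x + wpoly q x)"
  and wpoly_smult: "wpoly (smult c p) = (\<lambda>x. c * wpoly p x)"
  by (simp_all add: fun_eq_iff wpoly_def algebra_simps)

lemma integrable_wpoly_Icc: "a \<ge> 0 \<Longrightarrow> wpoly p integrable_on {a..b}"
  by (rule integrable_on_subinterval[OF integrable_wpoly]) auto

lemma continuous_on_wpoly: "a > 0 \<Longrightarrow> continuous_on {a..b} (wpoly p)"
  unfolding wpoly_def base_weight_def by (intro continuous_intros) auto

lemma wpoly_bound_Icc:
  assumes "a > 0"
  obtains G where "G \<ge> 0" "\<And>x. x \<in> {a..b} \<Longrightarrow> \<bar>wpoly p x\<bar> \<le> G"
  using continuous_on_compact_bound[OF compact_Icc continuous_on_wpoly[OF assms]]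
  by (metis real_norm_def)

lemma wpoly_square_nonneg: "wpoly (q * q) x \<ge> 0"
  by (simp add: wpoly_def base_weight_nonneg)

lemma integral_wpoly_square_pos:
  assumes "0 < a" "a < b" "q \<noteq> 0"
  shows "integral {a..b} (wpoly (q * q)) > 0"
proof -
  have "\<not> (\<forall>x\<in>{a..b}. wpoly (q * q) x = 0)"
  proof
    assume zero: "\<forall>x\<in>{a..b}. wpoly (q * q) x = 0"
    have "{a..b} \<subseteq> {x. poly q x = 0}"
    proof
      fix x assume "x \<in> {a..b}"
      then have "poly q x * poly q x * base_weight x = 0" "base_weight x > 0"
        using zero assms(1) base_weight_pos[of x] by (auto simp: wpoly_def)
      then show "x \<in> {x. poly q x = 0}" by simp
    qed
    then show False
      using assms(2,3) poly_roots_finite[of q] finite_subset infinite_Icc by blast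
  qed
  then have "integral {a..b} (wpoly (q * q)) \<noteq> 0"
    using assms by (subst integral_eq_0_iff) (auto intro: continuous_on_wpoly wpoly_square_nonneg)
  moreover have "integral {a..b} (wpoly (q * q)) \<ge> 0"
    using assms by (intro integral_nonneg integrable_wpoly_Icc wpoly_square_nonneg) auto
  ultimately show ?thesis by simp
qed

lemma partial_moment_add:
  "s \<ge> 0 \<Longrightarrow> partial_moment (p + q) s = partial_moment p s + partial_moment q s"
  unfolding partial_moment_def wpoly_add by (intro integral_add integrable_wpoly_Icc order_refl)

lemma partial_moment_smult: "partial_moment (smult c p) s = c * partial_moment p s"
  by (simp add: partial_moment_def wpoly_smult)

lemma partial_moment_diff_eq_integral:
  "0 \<le> s \<Longrightarrow> s \<le> T \<Longrightarrow>
    partial_moment p T - partial_moment p s = integral {s..T} (wpoly p)"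
  unfolding partial_moment_def
  using Henstock_Kurzweil_Integration.integral_combine[of 0 s T "wpoly p"]
    integrable_wpoly_Icc[of 0 p T]
  by simp

lemma partial_moment_lipschitz:
  assumes "a > 0" "x \<in> {a..b}" "y \<in> {a..b}"
    and bound: "\<And>z. z \<in> {a..b} \<Longrightarrow> \<bar>wpoly p z\<bar> \<le> K"
  shows "\<bar>partial_moment p x - partial_moment p y\<bar> \<le> K * \<bar>x - y\<bar>"
proof -
  have "\<bar>partial_moment p x - partial_moment p y\<bar> \<le> K * (x - y)"
    if "x \<in> {a..b}" "y \<in> {a..b}" "y \<le> x" for x y
  proof -
    have "norm (integral {y..x} (wpoly p)) \<le> K * (x - y)"
      using that assms(1) bound by (intro integral_bound continuous_on_wpoly) auto
    then show ?thesis
      using that assms(1) by (simp add: partial_moment_diff_eq_integral)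
  qed
  from this[of x y] this[of y x] assms(2,3) show ?thesis
    by (cases "y \<le> x") (auto simp: abs_minus_commute)
qed

lemma has_real_derivative_partial_moment:
  assumes "t > 0"
  shows "((\<lambda>s. partial_moment p s) has_real_derivative wpoly p t) (at t)"
proof -
  have "((\<lambda>s. integral {t/2..s} (wpoly p)) has_real_derivative wpoly p t) (at t within {t/2..2*t})"
    using assms by (intro integral_has_real_derivative continuous_on_wpoly) auto
  then have "((\<lambda>s. partial_moment p (t/2) + integral {t/2..s} (wpoly p))
      has_real_derivative wpoly p t) (at t)"
    using assms at_within_interior[of t "{t/2..2*t}"] by (auto intro!: derivative_eq_intros)
  moreover have "\<forall>\<^sub>F s in nhds t.
      partial_moment p (t/2) + integral {t/2..s} (wpoly p) = partial_moment p s"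
  proof -
    have "\<forall>\<^sub>F s in nhds t. s \<in> {t/2<..}"
      using assms by (intro eventually_nhds_in_open) auto
    then show ?thesis
      by eventually_elim (use assms in \<open>simp add: partial_moment_diff_eq_integral[symmetric]\<close>)
  qed
  ultimately show ?thesis by (simp add: DERIV_cong_ev)
qed

lemma has_integral_moment:
  assumes "s \<ge> 0"
  shows "((\<lambda>x. poly p x * wgt \<alpha> A B s x) has_integral
           (A + B) * integral {0..} (wpoly p) - B * partial_moment p s) {0..}"
proof -
  have "{0..s} \<subseteq> {0::real..}" by auto
  then have "((\<lambda>x. if x \<in> {0..s} then wpoly p x else 0) has_integral partial_moment p s) {0..}"
    using integrable_wpoly_Icc[of 0 p s]
    by (simp only: has_integral_restrict partial_moment_def integrable_integral)
  then have "((\<lambda>x. (A + B) * wpoly p x - B * (if x \<in> {0..s} then wpoly p x else 0)) has_integral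
      (A + B) * integral {0..} (wpoly p) - B * partial_moment p s) {0..}"
    by (intro has_integral_diff has_integral_mult_right integrable_integral integrable_wpoly)
  then show ?thesis
    by (rule has_integral_eq[rotated])
      (auto simp: wgt_def heaviside_def wpoly_def base_weight_def algebra_simps)
qed

lemma moment_eq:
  "s \<ge> 0 \<Longrightarrow> moment s p = (A + B) * integral {0..} (wpoly p) - B * partial_moment p s"
  unfolding moment_def using has_integral_moment by blast

lemma moment_add: "s \<ge> 0 \<Longrightarrow> moment s (p + q) = moment s p + moment s q"
  and moment_smult: "s \<ge> 0 \<Longrightarrow> moment s (smult c p) = c * moment s p"
  by (simp_all add: moment_eq partial_moment_add partial_moment_smult wpoly_add wpoly_smult
      integral_add integrable_wpoly algebra_simps)

lemma moment_diff: "s \<ge> 0 \<Longrightarrow> moment s (p - q) = moment s p - moment s q"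
  using moment_add[of s "p - q" q] by simp

lemma moment_sum: "s \<ge> 0 \<Longrightarrow> moment s (\<Sum>k\<in>K. f k) = (\<Sum>k\<in>K. moment s (f k))"
  by (induction K rule: infinite_finite_induct) (simp_all add: moment_add moment_def[of s 0])

lemma moment_shift:
  "s \<ge> 0 \<Longrightarrow> t \<ge> 0 \<Longrightarrow>
    moment s p = moment t p + B * (partial_moment p t - partial_moment p s)"
  by (simp add: moment_eq algebra_simps)

lemma moment_mult_eq_integral:
  "integral {0..} (\<lambda>x. poly p x * poly q x * wgt \<alpha> A B s x) = moment s (p * q)"
  by (simp add: moment_def)

lemma hnorm_eq_moment: "hnorm \<alpha> A B s q = moment s (q * q)"
  by (simp add: hnorm_def moment_def power2_eq_square)

lemma moment_square_nonneg:
  assumes "s \<ge> 0"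
  shows "moment s (q * q) \<ge> 0"
  unfolding moment_def using assms has_integral_moment[of s "q * q"] A_nonneg B_pos
  by (intro integral_nonneg) (auto simp: wgt_def heaviside_def)

lemma moment_square_antimono:
  assumes "0 \<le> s" "s \<le> T"
  shows "moment T (q * q) \<le> moment s (q * q)"
proof -
  have "integral {s..T} (wpoly (q * q)) \<ge> 0"
    using assms by (intro integral_nonneg integrable_wpoly_Icc wpoly_square_nonneg)
  then show ?thesis
    using assms B_pos moment_shift[of s T] partial_moment_diff_eq_integral[of s T] by simp
qed

lemma moment_square_pos:
  assumes "s \<ge> 0" "q \<noteq> 0"
  shows "moment s (q * q) > 0"
proof -
  have "0 < B * integral {s + 1..s + 2} (wpoly (q * q))"
    using assms B_pos by (intro mult_pos_pos integral_wpoly_square_pos) auto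
  also have "\<dots> \<le> moment (s + 2) (q * q) + B * integral {s + 1..s + 2} (wpoly (q * q))"
    using assms moment_square_nonneg[of "s + 2"] by simp
  also have "\<dots> = moment (s + 1) (q * q)"
    using assms moment_shift[of "s + 1" "s + 2"] partial_moment_diff_eq_integral[of "s + 1" "s + 2"]
    by simp
  also have "\<dots> \<le> moment s (q * q)"
    using assms by (intro moment_square_antimono) auto
  finally show ?thesis .
qed

lemma moment_Cauchy_Schwarz:
  assumes "s \<ge> 0"
  shows "(moment s (u * v))\<^sup>2 \<le> moment s (u * u) * moment s (v * v)"
proof (cases "v = 0")
  case False
  define a where "a = moment s (v * v)"
  define b where "b = moment s (u * v)"
  have square: "(smult a u - smult b v) * (smult a u - smult b v)
      = smult (a * a) (u * u) + smult (- 2 * a * b) (u * v) + smult (b * b) (v * v)"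
    by (rule poly_eq_poly_eq_iff[THEN iffD1]) (simp add: fun_eq_iff algebra_simps)
  have "0 \<le> moment s ((smult a u - smult b v) * (smult a u - smult b v))"
    using assms by (rule moment_square_nonneg)
  also have "\<dots> = a * (a * moment s (u * u) - b * b)"
    unfolding square using assms
    by (simp add: moment_add moment_diff moment_smult flip: a_def b_def) (simp add: algebra_simps)
  finally have "b * b \<le> a * moment s (u * u)"
    using moment_square_pos[OF assms False] by (simp add: a_def zero_le_mult_iff)
  then show ?thesis by (simp add: power2_eq_square a_def b_def mult.commute)
qed (simp add: moment_def)

end

locale step_laguerre_OPS = step_laguerre_weight +
  fixes P :: "nat \<Rightarrow> real \<Rightarrow> real poly"
  assumes OPS: "\<And>s. s > 0 \<Longrightarrow> monic_OPS \<alpha> A B s (\<lambda>k. P k s)"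
begin

lemma degree_P: "s > 0 \<Longrightarrow> degree (P k s) = k"
  and lead_coeff_P: "s > 0 \<Longrightarrow> lead_coeff (P k s) = 1"
  using OPS unfolding monic_OPS_def by blast+

lemma P_nonzero: "s > 0 \<Longrightarrow> P k s \<noteq> 0"
  using lead_coeff_P[of s k] by auto

lemma moment_P_orthogonal: "s > 0 \<Longrightarrow> j \<noteq> k \<Longrightarrow> moment s (P k s * P j s) = 0"
  using OPS[of s] unfolding monic_OPS_def moment_mult_eq_integral by blast

lemma coeff_P_diff_eq_0: "s > 0 \<Longrightarrow> t > 0 \<Longrightarrow> i \<ge> n \<Longrightarrow> coeff (P n s - P n t) i = 0"
  using coeff_diff_monic_same_degree[OF degree_P degree_P lead_coeff_P lead_coeff_P] by blast

lemma moment_P_mult_lower_degree: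
  assumes "s > 0" and q: "\<And>i. i \<ge> m \<Longrightarrow> coeff q i = 0"
  shows "moment s (P m s * q) = 0"
proof -
  obtain c where c: "q = (\<Sum>k<m. smult (c k) (P k s))"
    using monic_basis_expansion[of "\<lambda>k. P k s" m q] degree_P lead_coeff_P assms by blast
  have "moment s (P m s * q) = (\<Sum>k<m. c k * moment s (P m s * P k s))"
    unfolding c using assms(1)
    by (simp add: sum_distrib_left mult_smult_right moment_sum moment_smult)
  also have "\<dots> = 0" using assms(1) by (simp add: moment_P_orthogonal)
  finally show ?thesis .
qed

lemma moment_mult_P_eq_coeff:
  assumes "s > 0" and u: "\<And>i. i > m \<Longrightarrow> coeff u i = 0"
  shows "moment s (u * P m s) = coeff u m * moment s (P m s * P m s)"
proof -
  define r where "r = u - smult (coeff u m) (P m s)"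
  have "coeff r i = 0" if "i \<ge> m" for i
    using that u degree_P[OF assms(1), of m] lead_coeff_P[OF assms(1), of m]
    by (cases "i = m") (simp_all add: r_def coeff_eq_0)
  then have "moment s (P m s * r) = 0" by (intro moment_P_mult_lower_degree assms(1))
  moreover have "u * P m s = P m s * r + smult (coeff u m) (P m s * P m s)"
    by (simp add: r_def algebra_simps)
  ultimately show ?thesis using assms(1) by (simp add: moment_add moment_smult)
qed

lemma sup_le_moment_norm:
  assumes "T > 0"
  obtains C where "C \<ge> 0"
    and "\<And>u x. (\<And>i. i \<ge> n \<Longrightarrow> coeff u i = 0) \<Longrightarrow> x \<in> {a..b} \<Longrightarrow>
           \<bar>poly u x\<bar> \<le> C * sqrt (moment T (u * u))"
proof -
  define h where "h k = moment T (P k T * P k T)" for k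
  have h_pos: "h k > 0" for k
    unfolding h_def using assms P_nonzero by (intro moment_square_pos) auto
  have "\<exists>C. \<forall>x\<in>{a..b}. \<bar>poly (P k T) x\<bar> \<le> C" for k
  proof -
    have "continuous_on {a..b} (\<lambda>x. poly (P k T) x)" by (intro continuous_intros)
    from continuous_on_compact_bound[OF compact_Icc this] show ?thesis by (metis real_norm_def)
  qed
  then obtain bd where bd: "\<And>k x. x \<in> {a..b} \<Longrightarrow> \<bar>poly (P k T) x\<bar> \<le> bd k" by metis
  define C where "C = (\<Sum>k<n. \<bar>bd k\<bar> / sqrt (h k))"
  have "\<bar>poly u x\<bar> \<le> C * sqrt (moment T (u * u))"
    if u: "\<And>i. i \<ge> n \<Longrightarrow> coeff u i = 0" and x: "x \<in> {a..b}" for u x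
  proof -
    define N where "N = moment T (u * u)"
    obtain c where c: "u = (\<Sum>k<n. smult (c k) (P k T))"
      using monic_basis_expansion[of "\<lambda>k. P k T" n u] degree_P lead_coeff_P assms u by blast
    have "\<bar>c j\<bar> \<le> sqrt N / sqrt (h j)" if "j < n" for j
    proof -
      have "moment T (u * P j T) = (\<Sum>k<n. c k * moment T (P k T * P j T))"
        unfolding c using assms by (simp add: sum_distrib_right mult_smult_left moment_sum moment_smult)
      also have "\<dots> = (\<Sum>k<n. if k = j then c j * h j else 0)"
        using assms by (intro sum.cong) (auto simp: h_def moment_P_orthogonal)
      also have "\<dots> = c j * h j" using that by simp
      finally have "(c j * h j)\<^sup>2 \<le> N * h j"
        using moment_Cauchy_Schwarz[of T u "P j T"] assms by (simp add: N_def h_def)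
      then have "(c j)\<^sup>2 \<le> N / h j"
        using h_pos[of j] by (simp add: power2_eq_square field_simps)
      then show ?thesis using real_sqrt_le_mono by (fastforce simp: real_sqrt_divide)
    qed
    moreover have "0 \<le> sqrt N / sqrt (h k)" for k
      using h_pos[of k] moment_square_nonneg[of T u] assms by (simp add: N_def)
    moreover have "\<bar>poly (P k T) x\<bar> \<le> \<bar>bd k\<bar>" for k
      using bd[OF x] by (rule order_trans) simp
    ultimately have "(\<Sum>k<n. \<bar>c k\<bar> * \<bar>poly (P k T) x\<bar>)
        \<le> (\<Sum>k<n. sqrt N / sqrt (h k) * \<bar>bd k\<bar>)"
      by (intro sum_mono mult_mono) auto
    moreover have "\<bar>poly u x\<bar> \<le> (\<Sum>k<n. \<bar>c k\<bar> * \<bar>poly (P k T) x\<bar>)"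
      unfolding c by (simp add: poly_sum order_trans[OF sum_abs] abs_mult)
    moreover have "(\<Sum>k<n. sqrt N / sqrt (h k) * \<bar>bd k\<bar>) = C * sqrt N"
      unfolding C_def sum_distrib_right by (simp add: divide_inverse mult_ac)
    ultimately show ?thesis by (simp add: N_def)
  qed
  moreover have "C \<ge> 0"
    unfolding C_def using h_pos by (intro sum_nonneg divide_nonneg_nonneg) (auto intro: less_imp_le)
  ultimately show ?thesis using that by blast
qed

lemma moment_P_diff_mult:
  assumes "s > 0" "t > 0" and q: "\<And>i. i \<ge> n \<Longrightarrow> coeff q i = 0"
  shows "moment s ((P n s - P n t) * q)
           = B * (partial_moment (P n t * q) s - partial_moment (P n t * q) t)"
proof -
  have "moment s (P n s * q) = 0" "moment t (P n t * q) = 0"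
    using assms q by (simp_all add: moment_P_mult_lower_degree)
  then show ?thesis
    using assms moment_shift[of s t "P n t * q"] by (simp add: left_diff_distrib moment_diff right_diff_distrib)
qed

lemma subleading_coeff_P_diff:
  assumes "s > 0" "t > 0" "n \<ge> 1"
  defines "Q \<equiv> P (n - 1) t" and "u \<equiv> P n s - P n t"
  shows "(coeff (P n s) (n - 1) - coeff (P n t) (n - 1)) * moment t (Q * Q)
           = B * (partial_moment (P n t * Q) s - partial_moment (P n t * Q) t)
             + B * (partial_moment (u * Q) s - partial_moment (u * Q) t)"
proof -
  have "coeff u i = 0" if "i > n - 1" for i
    using coeff_P_diff_eq_0[OF assms(1,2)] that assms(3) by (simp add: u_def)
  then have "moment t (u * Q) = coeff u (n - 1) * moment t (Q * Q)"
    unfolding Q_def by (rule moment_mult_P_eq_coeff[OF assms(2)])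
  moreover have "moment t (u * Q) = B * (partial_moment (P n s * Q) s - partial_moment (P n s * Q) t)"
  proof -
    have "i \<ge> n \<Longrightarrow> coeff Q i = 0" for i
      using assms(2,3) by (simp add: Q_def degree_P coeff_eq_0)
    then have "moment t ((P n t - P n s) * Q)
        = B * (partial_moment (P n s * Q) t - partial_moment (P n s * Q) s)"
      by (rule moment_P_diff_mult[OF assms(2,1)])
    then show ?thesis
      using assms(2) by (simp add: u_def left_diff_distrib moment_diff right_diff_distrib)
  qed
  moreover have "partial_moment (P n s * Q) x = partial_moment (P n t * Q) x + partial_moment (u * Q) x"
    if "x \<ge> 0" for x
  proof -
    have "P n s * Q = P n t * Q + u * Q" by (simp add: u_def algebra_simps)
    then show ?thesis using that by (simp add: partial_moment_add)
  qed
  moreover have "coeff u (n - 1) = coeff (P n s) (n - 1) - coeff (P n t) (n - 1)"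
    by (simp add: u_def)
  ultimately show ?thesis
    using assms(1,2) by (simp add: right_diff_distrib distrib_left)
qed

text \<open>
  With N = M(2t, u^2) for u = P_n(s) - P_n(t), orthogonality bounds N by a multiple of
  |s - t| \<surd>N, hence \<surd>N = O(|s - t|).
\<close>

lemma P_diff_lipschitz:
  assumes "t > 0"
  obtains K where "K \<ge> 0"
    and "\<And>s x. s \<in> {t/2..2*t} \<Longrightarrow> x \<in> {t/2..2*t} \<Longrightarrow>
           \<bar>poly (P n s - P n t) x\<bar> \<le> K * \<bar>s - t\<bar>"
proof -
  obtain C where C: "C \<ge> 0"
    "\<And>u x. (\<And>i. i \<ge> n \<Longrightarrow> coeff u i = 0) \<Longrightarrow> x \<in> {t/2..2*t} \<Longrightarrow>
      \<bar>poly u x\<bar> \<le> C * sqrt (moment (2*t) (u * u))"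
    using sup_le_moment_norm[where T = "2*t" and n = n and a = "t/2" and b = "2*t"] assms by auto
  obtain E where E: "E \<ge> 0" "\<And>x. x \<in> {t/2..2*t} \<Longrightarrow> \<bar>wpoly (P n t) x\<bar> \<le> E"
    using wpoly_bound_Icc[of "t/2"] assms by auto
  have "\<bar>poly (P n s - P n t) x\<bar> \<le> (C * C * B * E) * \<bar>s - t\<bar>"
    if s: "s \<in> {t/2..2*t}" and x: "x \<in> {t/2..2*t}" for s x
  proof -
    define u where "u = P n s - P n t"
    define N where "N = moment (2*t) (u * u)"
    have "s > 0" using s assms by simp
    have u_low: "coeff u i = 0" if "i \<ge> n" for i
      unfolding u_def using \<open>s > 0\<close> assms that by (rule coeff_P_diff_eq_0)
    have u_bound: "\<bar>poly u z\<bar> \<le> C * sqrt N" if "z \<in> {t/2..2*t}" for z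
      unfolding N_def using u_low that by (rule C(2))
    have "N \<le> moment s (u * u)"
      unfolding N_def using s assms by (intro moment_square_antimono) auto
    also have "\<dots> = B * (partial_moment (P n t * u) s - partial_moment (P n t * u) t)"
      using moment_P_diff_mult[where n = n, OF \<open>s > 0\<close> assms u_low, folded u_def] .
    also have "\<dots> \<le> B * (E * (C * sqrt N) * \<bar>s - t\<bar>)"
    proof -
      have "\<bar>wpoly (P n t * u) z\<bar> \<le> E * (C * sqrt N)" if "z \<in> {t/2..2*t}" for z
      proof -
        have "\<bar>wpoly (P n t * u) z\<bar> = \<bar>wpoly (P n t) z\<bar> * \<bar>poly u z\<bar>"
          by (simp add: wpoly_def abs_mult)
        also have "\<dots> \<le> E * (C * sqrt N)"
          using E u_bound[OF that] that by (intro mult_mono) auto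
        finally show ?thesis .
      qed
      then have "\<bar>partial_moment (P n t * u) s - partial_moment (P n t * u) t\<bar>
          \<le> E * (C * sqrt N) * \<bar>s - t\<bar>"
        using s assms by (intro partial_moment_lipschitz[where a = "t/2" and b = "2*t"]) auto
      then show ?thesis using B_pos by (simp add: mult_left_mono)
    qed
    finally have "sqrt N \<le> B * E * C * \<bar>s - t\<bar>"
      using moment_square_nonneg[of "2*t" u] assms B_pos E(1) C(1)
      by (intro sqrt_le_of_le_mult_sqrt) (simp_all add: N_def mult_ac)
    then have "C * sqrt N \<le> C * (B * E * C * \<bar>s - t\<bar>)" using C(1) by (rule mult_left_mono)
    with u_bound[OF x] show ?thesis by (simp add: u_def mult_ac)
  qed
  moreover have "C * C * B * E \<ge> 0" using C(1) E(1) B_pos by simp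
  ultimately show ?thesis using that by blast
qed

lemma partial_moment_P_diff_quadratic:
  assumes "t > 0"
  obtains C where "\<And>s. s \<in> {t/2..2*t} \<Longrightarrow>
    \<bar>partial_moment ((P n s - P n t) * q) s - partial_moment ((P n s - P n t) * q) t\<bar> \<le> C * (s - t)\<^sup>2"
proof -
  obtain K where K: "K \<ge> 0"
    "\<And>s x. s \<in> {t/2..2*t} \<Longrightarrow> x \<in> {t/2..2*t} \<Longrightarrow>
      \<bar>poly (P n s - P n t) x\<bar> \<le> K * \<bar>s - t\<bar>"
    using P_diff_lipschitz[where n = n, OF assms] by blast
  obtain G where G: "G \<ge> 0" "\<And>x. x \<in> {t/2..2*t} \<Longrightarrow> \<bar>wpoly q x\<bar> \<le> G"
    using wpoly_bound_Icc[of "t/2"] assms by auto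
  have "\<bar>partial_moment ((P n s - P n t) * q) s - partial_moment ((P n s - P n t) * q) t\<bar>
      \<le> (K * G) * (s - t)\<^sup>2" if s: "s \<in> {t/2..2*t}" for s
  proof -
    have "\<bar>wpoly ((P n s - P n t) * q) z\<bar> \<le> K * \<bar>s - t\<bar> * G" if "z \<in> {t/2..2*t}" for z
    proof -
      have "\<bar>wpoly ((P n s - P n t) * q) z\<bar> = \<bar>poly (P n s - P n t) z\<bar> * \<bar>wpoly q z\<bar>"
        by (simp add: wpoly_def abs_mult)
      also have "\<dots> \<le> K * \<bar>s - t\<bar> * G"
        using K G s that by (intro mult_mono) auto
      finally show ?thesis .
    qed
    then have "\<bar>partial_moment ((P n s - P n t) * q) s - partial_moment ((P n s - P n t) * q) t\<bar>
        \<le> K * \<bar>s - t\<bar> * G * \<bar>s - t\<bar>"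
      using s assms by (intro partial_moment_lipschitz[where a = "t/2" and b = "2*t"]) auto
    then show ?thesis by (simp add: power2_eq_square abs_mult_self_eq mult_ac)
  qed
  then show ?thesis using that by blast
qed

end

theorem lemma9:
  fixes \<alpha> A B :: real and P :: "nat \<Rightarrow> real \<Rightarrow> real poly" and n :: nat and t :: real
  assumes "\<alpha> > 0" and "A \<ge> 0" and "B > 0" and "t > 0"
    and "\<And>s. s > 0 \<Longrightarrow> monic_OPS \<alpha> A B s (\<lambda>k. P k s)"
    and "n \<ge> 1"
  shows "((\<lambda>s. coeff (P n s) (n - 1)) has_real_derivative
           B * t powr \<alpha> * exp (- t) * poly (P n t) t * poly (P (n - 1) t) t
             / hnorm \<alpha> A B t (P (n - 1) t)) (at t)"
proof -
  interpret step_laguerre_OPS \<alpha> A B P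
    using assms by unfold_locales auto
  define Q where "Q = P (n - 1) t"
  define h where "h = moment t (Q * Q)"
  define rem where
    "rem s = partial_moment ((P n s - P n t) * Q) s - partial_moment ((P n s - P n t) * Q) t" for s
  have "h > 0" unfolding h_def Q_def using assms(4) P_nonzero by (intro moment_square_pos) auto
  have near_t: "\<forall>\<^sub>F s in nhds t. s \<in> {t/2<..<2*t}"
    using assms(4) by (intro eventually_nhds_in_open) auto
  obtain C where "\<And>s. s \<in> {t/2..2*t} \<Longrightarrow> \<bar>rem s\<bar> \<le> C * (s - t)\<^sup>2"
    using partial_moment_P_diff_quadratic[OF assms(4), of n Q] unfolding rem_def by blast
  with near_t have "(rem has_real_derivative 0) (at t)"
    by (intro has_real_derivative_zero_if_quadratic_bound[where C = C])
      (auto simp: rem_def elim!: eventually_mono)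
  then have "((\<lambda>s. coeff (P n t) (n - 1) + B / h *
        (partial_moment (P n t * Q) s - partial_moment (P n t * Q) t + rem s))
      has_real_derivative B / h * wpoly (P n t * Q) t) (at t)"
    using has_real_derivative_partial_moment[OF assms(4)] \<open>h > 0\<close> by (auto intro!: derivative_eq_intros)
  moreover have "\<forall>\<^sub>F s in nhds t. coeff (P n s) (n - 1) = coeff (P n t) (n - 1) + B / h *
        (partial_moment (P n t * Q) s - partial_moment (P n t * Q) t + rem s)"
    using near_t
  proof eventually_elim
    case (elim s)
    then have "(coeff (P n s) (n - 1) - coeff (P n t) (n - 1)) * h = B *
        (partial_moment (P n t * Q) s - partial_moment (P n t * Q) t + rem s)"
      using subleading_coeff_P_diff[of s t n] assms(4,6)
      by (simp add: h_def Q_def rem_def distrib_left)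
    with \<open>h > 0\<close> show ?case by (simp add: field_simps)
  qed
  ultimately have "((\<lambda>s. coeff (P n s) (n - 1)) has_real_derivative B / h * wpoly (P n t * Q) t) (at t)"
    by (simp add: DERIV_cong_ev)
  then show ?thesis
    by (simp add: h_def Q_def hnorm_eq_moment wpoly_def base_weight_def mult_ac)
qed

end
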